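(* Let $\gamma_*>0$ and let $\Phi$ denote the standard normal CDF. Define \[ t_+=\tfrac32\gamma_*+\tfrac{1}{\gamma_*}\log\left(1-\sqrt{1-e^{-\gamma_*}}\right),\qquad t_-=\tfrac32\gamma_*+\tfrac{1}{\gamma_*}\log\left(1+\sqrt{1-e^{-\gamma_*}}\right), \] and for $x\neq 0$ \[ \tilde h(x)=\frac{\Phi(t_--x)-\Phi(t_-)}{\Phi(t_+-x)-\Phi(t_+)}. \] Let $k=e^{-\frac12(t_--2\gamma_* )^2+\frac12(t_+-2\gamma_* )^2}$ and $c=\frac{k}{1+k}$. Then $\tilde h(x)\le\frac{c}{1-c}$ for all $x<0$. *)

theory Defs
  imports "HOL-Probability.Probability"
begin

definition Phi :: "real \<Rightarrow> real" where
  "Phi t = cdf (density lborel std_normal_density) t"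

end

theory Submission
  imports Defs
begin

text \<open>Write \<open>d = t\<^sub>- - t\<^sub>+ > 0\<close> and \<open>y = -x > 0\<close>. Numerator and denominator of
  \<open>h\<close> are the Gaussian masses of the windows \<open>[t\<^sub>-, t\<^sub>- + y]\<close> and \<open>[t\<^sub>+, t\<^sub>+ + y]\<close>. Shifting
  the first window onto the second, the density ratio \<open>\<phi>(u + d) / \<phi>(u) = exp (- u d - d\<^sup>2/2)\<close>
  decreases in \<open>u\<close>, so on \<open>u \<ge> t\<^sub>+\<close> it is at most \<open>exp (- (t\<^sub>-\<^sup>2 - t\<^sub>+\<^sup>2) / 2)\<close>. This bounds
  \<open>h\<close>, and it is at most \<open>k = exp (- (t\<^sub>-\<^sup>2 - t\<^sub>+\<^sup>2) / 2 + 2 \<gamma> d) = c / (1 - c)\<close>. Of the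
  particular values of \<open>t\<^sub>\<plusminus>\<close> only \<open>t\<^sub>+ < t\<^sub>-\<close> is used.\<close>

lemma cdf_density_diff_eq_integral:
  fixes f :: "real \<Rightarrow> real"
  assumes "prob_space (density lborel f)" and "continuous_on UNIV f" and "\<And>x. 0 \<le> f x"
    and "a \<le> b"
  shows "cdf (density lborel f) b - cdf (density lborel f) a = integral {a..b} f"
proof -
  define M where "M = density lborel f"
  interpret prob_space M
    unfolding M_def by (rule assms(1))
  have [measurable]: "f \<in> borel_measurable borel"
    using assms(2) by (rule borel_measurable_continuous_onI)
  have "(f has_integral integral {a..b} f) {a..b}"
    using assms(2) by (auto intro: integrable_continuous_interval continuous_on_subset)
  then have "(f has_integral integral {a..b} f) {a<..b}"
    by (rule has_integral_spike_set_eq[THEN iffD1, rotated 2])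
       (rule negligible_subset[of "{a}"]; auto)+
  then have "emeasure M {a<..b} = ennreal (integral {a..b} f)"
    unfolding M_def using assms(3)
    by (simp add: emeasure_density nn_integral_has_integral_lebesgue')
  moreover have "0 \<le> integral {a..b} f"
    using assms(2,3) by (auto intro: integral_nonneg integrable_continuous_interval continuous_on_subset)
  ultimately have window: "measure M {a<..b} = integral {a..b} f"
    by (simp add: emeasure_eq_measure)
  have "{..b} = {..a} \<union> {a<..b}"
    using assms(4) by auto
  then have "measure M {..b} = measure M {..a} + measure M {a<..b}"
    by (simp only:) (rule finite_measure_Union; auto simp: M_def)
  then show ?thesis
    using window unfolding cdf_def M_def by simp
qed

lemma continuous_on_std_normal_density: "continuous_on A std_normal_density"
  unfolding std_normal_density_def by (intro continuous_intros) simp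

lemma Phi_diff_eq_integral:
  "a \<le> b \<Longrightarrow> Phi b - Phi a = integral {a..b} std_normal_density"
  unfolding Phi_def
  by (rule cdf_density_diff_eq_integral)
     (simp_all add: prob_space_normal_density continuous_on_std_normal_density)

lemma Phi_strict_mono:
  assumes "a < b"
  shows "Phi a < Phi b"
proof -
  have "integral {a..b} (\<lambda>_. 0::real) < integral {a..b} std_normal_density"
    using assms
    by (intro integral_less_real)
       (simp_all add: normal_density_pos continuous_on_std_normal_density)
  then show ?thesis
    using Phi_diff_eq_integral[of a b] assms by simp
qed

lemma std_normal_density_shift_le:
  fixes a b u :: real
  assumes "a \<le> b" and "a \<le> u"
  shows "std_normal_density (u + (b - a)) \<le> exp (- (b\<^sup>2 - a\<^sup>2) / 2) * std_normal_density u"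
proof -
  have "(u + (b - a))\<^sup>2 - u\<^sup>2 - (b\<^sup>2 - a\<^sup>2) = 2 * (u - a) * (b - a)"
    by (simp add: power2_eq_square algebra_simps)
  also have "\<dots> \<ge> 0"
    using assms by simp
  finally have "- (u + (b - a))\<^sup>2 / 2 \<le> - (b\<^sup>2 - a\<^sup>2) / 2 + - u\<^sup>2 / 2"
    by (simp add: field_simps)
  then have "exp (- (u + (b - a))\<^sup>2 / 2) \<le> exp (- (b\<^sup>2 - a\<^sup>2) / 2) * exp (- u\<^sup>2 / 2)"
    unfolding exp_add[symmetric] exp_le_cancel_iff .
  then show ?thesis
    unfolding std_normal_density_def by (simp add: divide_right_mono)
qed

lemma Phi_increment_ratio_le:
  fixes a b y :: real
  assumes "a \<le> b" and "0 < y"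
  shows "(Phi (b + y) - Phi b) / (Phi (a + y) - Phi a) \<le> exp (- (b\<^sup>2 - a\<^sup>2) / 2)"
proof -
  let ?K = "exp (- (b\<^sup>2 - a\<^sup>2) / 2)"
  have "continuous_on {a..a + y} (\<lambda>u. std_normal_density (u + (b - a)))"
    unfolding std_normal_density_def by (intro continuous_intros) simp
  have "Phi (b + y) - Phi b = integral {a..a + y} (\<lambda>u. std_normal_density (u + (b - a)))"
    using Phi_diff_eq_integral[of b "b + y"] assms(2)
      integral_shift_real_ivl[of b "b - a" "b + y" std_normal_density] by (simp add: add.commute)
  also have "\<dots> \<le> integral {a..a + y} (\<lambda>u. ?K * std_normal_density u)"
    using assms(1) \<open>continuous_on {a..a + y} _\<close>
    by (intro integral_le std_normal_density_shift_le integrable_continuous_interval)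
       (auto intro: continuous_on_mult_left continuous_on_std_normal_density)
  also have "\<dots> = ?K * (Phi (a + y) - Phi a)"
    using Phi_diff_eq_integral[of a "a + y"] assms(2) by simp
  finally show ?thesis
    using Phi_strict_mono[of a "a + y"] assms(2) by (simp add: divide_le_eq)
qed

theorem lemma8:
  fixes g :: real and x :: real
  assumes "g > 0" and "x < 0"
  defines "tp \<equiv> 3/2 * g + (1/g) * ln (1 - sqrt (1 - exp (- g)))"
      and "tm \<equiv> 3/2 * g + (1/g) * ln (1 + sqrt (1 - exp (- g)))"
  defines "k \<equiv> exp (- (1/2) * (tm - 2*g)^2 + (1/2) * (tp - 2*g)^2)"
  defines "c \<equiv> k / (1 + k)"
  shows "(Phi (tm - x) - Phi tm) / (Phi (tp - x) - Phi tp) \<le> c / (1 - c)"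
proof -
  define s where "s = sqrt (1 - exp (- g))"
  have "0 < s" and "s < 1"
    unfolding s_def using assms(1) by (auto simp: real_sqrt_lt_1_iff)
  then have "ln (1 - s) < ln (1 + s)"
    by simp
  then have "tp < tm"
    unfolding tp_def tm_def s_def[symmetric] using assms(1) by (simp add: divide_strict_right_mono)
  have "(Phi (tm - x) - Phi tm) / (Phi (tp - x) - Phi tp) \<le> exp (- (tm\<^sup>2 - tp\<^sup>2) / 2)"
    using Phi_increment_ratio_le[of tp tm "- x"] \<open>tp < tm\<close> assms(2) by simp
  also have "\<dots> \<le> k"
  proof -
    have "- (1/2) * (tm - 2*g)^2 + (1/2) * (tp - 2*g)^2 = - (tm\<^sup>2 - tp\<^sup>2) / 2 + 2 * g * (tm - tp)"
      by (simp add: power2_eq_square field_simps)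
    then show ?thesis
      unfolding k_def using assms(1) \<open>tp < tm\<close> by simp
  qed
  also have "k = c / (1 - c)"
  proof -
    have "0 < k"
      unfolding k_def by simp
    then show ?thesis
      unfolding c_def by (simp add: field_simps)
  qed
  finally show ?thesis .
qed

end
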